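(* Let $X$ be a real linear space, $T$ an infinite index set, and $f, f_t : X \to \overline{\mathbb{R}} := \mathbb{R}\cup\{\pm\infty\}$ ($t \in T$) convex proper functions. Let $M := \bigcap_{t\in T} \operatorname{dom} f_t$, $h:=\sup_{t\in T} f_t$, $\Delta_1 := \operatorname{dom} f\cap\operatorname{dom} h$, and define $$\sup(D) := \sup_{\lambda\in\mathbb{R}_+^{(T)}} \inf_{x\in M}\Big(f(x)+\sum_{t\in T}\lambda_t f_t(x)\Big),\qquad \sup(D_1) := \sup_{s\ge0}\inf_{x\in\Delta_1}\big(f(x)+s\,h(x)\big),$$ and $\inf(P):=\inf\{f(x): f_t(x)\le 0 \text{ for all } t\in T\}$. Then $$\sup(D)\le\sup(D_1)\le\inf(P).$$
   Context: $\operatorname{dom} g := \{x : g(x)<+\infty\}$; a proper function never takes the value $-\infty$ and has nonempty domain. $\mathbb{R}^{(T)}$ is the space of functions $\lambda=(\lambda_t)_{t\in T}:T\to\mathbb{R}$ with finite support $\operatorname{supp}\lambda=\{t:\lambda_t\neq0\}$, and $\mathbb{R}^{(T)}_+$ its elements with all $\lambda_t\ge0$; $\sum_{t\in T}\lambda_t f_t(x)$ means $\sum_{t\in\operatorname{supp}\lambda}\lambda_t f_t(x)$ if $\lambda\ne 0$ and $0$ if $\lambda=0$. Conventions: $\inf\emptyset=+\infty$, $\sup\emptyset=-\infty$. *)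

theory Defs
  imports "HOL-Analysis.Analysis"
begin

definition edom :: "('a \<Rightarrow> ereal) \<Rightarrow> 'a set" where
  "edom g = {x. g x < \<infinity>}"

definition proper_fun :: "('a \<Rightarrow> ereal) \<Rightarrow> bool" where
  "proper_fun g \<longleftrightarrow> (\<forall>x. g x \<noteq> -\<infinity>) \<and> edom g \<noteq> {}"

definition econvex :: "('a::real_vector \<Rightarrow> ereal) \<Rightarrow> bool" where
  "econvex g \<longleftrightarrow> convex {(x, r::real). g x \<le> ereal r}"

definition mults :: "'b set \<Rightarrow> ('b \<Rightarrow> real) set" where
  "mults T = {lam. finite {t. lam t \<noteq> 0} \<and> (\<forall>t. lam t \<ge> 0) \<and> (\<forall>t. t \<notin> T \<longrightarrow> lam t = 0)}"

end

theory Submission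
  imports Defs
begin

text \<open>Every Lagrangian multiplier \<open>\<lambda>\<close> is dominated by the single multiplier \<open>s = \<Sum>\<lambda>\<^sub>t\<close>
  of the aggregate constraint \<open>h = sup f\<^sub>t\<close>, because \<open>\<Sum>\<lambda>\<^sub>t f\<^sub>t \<le> s h\<close> and the domain of
  \<open>h\<close> lies in every domain of \<open>f\<^sub>t\<close>; and every feasible point \<open>x\<close> has \<open>h x \<le> 0\<close>, so
  \<open>f x + s h x \<le> f x\<close>.\<close>

lemma weighted_sum_le_weight_sum_mult_bound:
  fixes g :: "'b \<Rightarrow> ereal"
  assumes "\<And>t. t \<in> S \<Longrightarrow> 0 \<le> lam t" and "\<And>t. t \<in> S \<Longrightarrow> g t \<le> ereal r"
  shows "(\<Sum>t\<in>S. ereal (lam t) * g t) \<le> ereal (\<Sum>t\<in>S. lam t) * ereal r"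
proof -
  have "(\<Sum>t\<in>S. ereal (lam t) * g t) \<le> (\<Sum>t\<in>S. ereal (lam t) * ereal r)"
    by (intro sum_mono ereal_mult_left_mono) (use assms in auto)
  also have "\<dots> = ereal (\<Sum>t\<in>S. lam t) * ereal r"
    by (simp add: sum_distrib_right)
  finally show ?thesis .
qed

lemma edom_SUP_subset_INT_edom:
  "edom (\<lambda>x. SUP t\<in>T. g t x) \<subseteq> (\<Inter>t\<in>T. edom (g t))"
proof
  fix x assume "x \<in> edom (\<lambda>x. SUP t\<in>T. g t x)"
  then have bound: "(SUP t\<in>T. g t x) < \<infinity>" by (simp add: edom_def)
  have "g t x < \<infinity>" if "t \<in> T" for t
    using SUP_upper[OF that] bound by (rule le_less_trans)
  then show "x \<in> (\<Inter>t\<in>T. edom (g t))" by (simp add: edom_def)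
qed

lemma lagrangian_dual_le_aggregate_dual:
  fixes f :: "'a \<Rightarrow> ereal" and ft :: "'b \<Rightarrow> 'a \<Rightarrow> ereal"
  assumes "T \<noteq> {}" and ft_not_minf: "\<And>t x. t \<in> T \<Longrightarrow> ft t x \<noteq> -\<infinity>"
  defines "h \<equiv> (\<lambda>x. SUP t\<in>T. ft t x)"
  shows "(SUP lam\<in>mults T. INF x\<in>(\<Inter>t\<in>T. edom (ft t)).
            f x + (\<Sum>t\<in>{t. lam t \<noteq> 0}. ereal (lam t) * ft t x))
         \<le> (SUP s\<in>{0::real..}. INF x\<in>edom f \<inter> edom h. f x + ereal s * h x)"
proof (rule SUP_least)
  fix lam assume "lam \<in> mults T"
  define S where "S = {t. lam t \<noteq> 0}"
  have lam_nonneg: "\<And>t. 0 \<le> lam t" and "S \<subseteq> T"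
    using \<open>lam \<in> mults T\<close> unfolding mults_def S_def by auto
  define s where "s = (\<Sum>t\<in>S. lam t)"
  have ft_le_h: "\<And>t x. t \<in> T \<Longrightarrow> ft t x \<le> h x"
    unfolding h_def by (rule SUP_upper)
  have lagrangian_le:
    "f x + (\<Sum>t\<in>S. ereal (lam t) * ft t x) \<le> f x + ereal s * h x" if "x \<in> edom h" for x
  proof -
    obtain t0 where "t0 \<in> T" using \<open>T \<noteq> {}\<close> by blast
    then have "h x \<noteq> -\<infinity>"
      using ft_le_h ft_not_minf by (metis ereal_infty_less_eq(2))
    moreover have "h x \<noteq> \<infinity>" using that unfolding edom_def by auto
    ultimately obtain r where r: "h x = ereal r" by (cases "h x") auto
    have "\<And>t. t \<in> S \<Longrightarrow> ft t x \<le> ereal r"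
      using ft_le_h r \<open>S \<subseteq> T\<close> by (metis subsetD)
    then show ?thesis
      unfolding s_def r
      by (intro add_left_mono weighted_sum_le_weight_sum_mult_bound lam_nonneg)
  qed
  have "(INF x\<in>(\<Inter>t\<in>T. edom (ft t)). f x + (\<Sum>t\<in>S. ereal (lam t) * ft t x))
      \<le> (INF x\<in>edom f \<inter> edom h. f x + (\<Sum>t\<in>S. ereal (lam t) * ft t x))"
    using edom_SUP_subset_INT_edom[of ft T] unfolding h_def
    by (intro INF_superset_mono) auto
  also have "\<dots> \<le> (INF x\<in>edom f \<inter> edom h. f x + ereal s * h x)"
    by (intro INF_mono) (use lagrangian_le in blast)
  also have "\<dots> \<le> (SUP s\<in>{0::real..}. INF x\<in>edom f \<inter> edom h. f x + ereal s * h x)"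
    unfolding s_def by (intro SUP_upper) (simp add: lam_nonneg sum_nonneg)
  finally show "(INF x\<in>(\<Inter>t\<in>T. edom (ft t)). f x + (\<Sum>t\<in>{t. lam t \<noteq> 0}. ereal (lam t) * ft t x))
      \<le> (SUP s\<in>{0::real..}. INF x\<in>edom f \<inter> edom h. f x + ereal s * h x)"
    unfolding S_def .
qed

lemma aggregate_dual_le_primal:
  fixes f h :: "'a \<Rightarrow> ereal"
  shows "(SUP s\<in>{0::real..}. INF x\<in>edom f \<inter> edom h. f x + ereal s * h x)
         \<le> (INF x\<in>{x. h x \<le> 0}. f x)"
proof (intro SUP_least INF_greatest)
  fix s :: real and x assume "s \<in> {0..}" and "x \<in> {x. h x \<le> 0}"
  then have penalty_nonpos: "ereal s * h x \<le> 0"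
    using ereal_mult_left_mono[of "h x" 0 "ereal s"] by auto
  show "(INF x\<in>edom f \<inter> edom h. f x + ereal s * h x) \<le> f x"
  proof (cases "x \<in> edom f")
    case True
    with \<open>x \<in> {x. h x \<le> 0}\<close> have "x \<in> edom f \<inter> edom h"
      unfolding edom_def by (auto intro: le_less_trans)
    moreover have "f x + ereal s * h x \<le> f x"
      using add_left_mono[OF penalty_nonpos, of "f x"] by simp
    ultimately show ?thesis by (rule INF_lower2)
  qed (simp add: edom_def)
qed

theorem lemma3p1:
  fixes f :: "'a::real_vector \<Rightarrow> ereal"
    and ft :: "'b \<Rightarrow> 'a \<Rightarrow> ereal"
    and T :: "'b set"
  assumes "infinite T"
    and "econvex f" and "proper_fun f"
    and "\<And>t. t \<in> T \<Longrightarrow> econvex (ft t) \<and> proper_fun (ft t)"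
  defines "M \<equiv> (\<Inter>t\<in>T. edom (ft t))"
    and "h \<equiv> (\<lambda>x. SUP t\<in>T. ft t x)"
  defines "\<Delta>1 \<equiv> edom f \<inter> edom h"
  defines "supD \<equiv> (SUP lam\<in>mults T. INF x\<in>M.
              f x + (\<Sum>t\<in>{t. lam t \<noteq> 0}. ereal (lam t) * ft t x))"
    and "supD1 \<equiv> (SUP s\<in>{0::real..}. INF x\<in>\<Delta>1. f x + ereal s * h x)"
    and "infP \<equiv> (INF x\<in>{x. \<forall>t\<in>T. ft t x \<le> 0}. f x)"
  shows "supD \<le> supD1 \<and> supD1 \<le> infP"
proof
  have "T \<noteq> {}" using \<open>infinite T\<close> by auto
  moreover have "\<And>t x. t \<in> T \<Longrightarrow> ft t x \<noteq> -\<infinity>"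
    using assms(4) unfolding proper_fun_def by blast
  ultimately show "supD \<le> supD1"
    unfolding supD_def supD1_def M_def \<Delta>1_def h_def
    by (rule lagrangian_dual_le_aggregate_dual)
  have "{x. \<forall>t\<in>T. ft t x \<le> 0} = {x. h x \<le> 0}"
    unfolding h_def by (simp add: SUP_le_iff)
  then show "supD1 \<le> infP"
    unfolding supD1_def infP_def \<Delta>1_def by (simp only: aggregate_dual_le_primal)
qed

end
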